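(* Let $R$ be a ring with identity and involution $*$, and let $a,b\in R$ with $Ra=Ra^2$. Then the following are equivalent: (1) $a$ is core invertible with core inverse $b$; (2) $aba=a$, $(ab)^*=ab$ and $ab^2=b$.
   Context: An involution on $R$ satisfies $(a^* )^*=a$, $(ab)^*=b^*a^*$, $(a+b)^*=a^*+b^*$. An element $x\in R$ is a core inverse of $a$ if $axa=a$, $xR=aR$ and $Rx=Ra^*$; it is unique when it exists. $Ra=\{ra: r\in R\}$. *)

theory Defs
  imports Main
begin

definition involution :: "('a::ring_1 \<Rightarrow> 'a) \<Rightarrow> bool" where
  "involution star \<longleftrightarrow>
     (\<forall>a. star (star a) = a) \<and>
     (\<forall>a b. star (a * b) = star b * star a) \<and>
     (\<forall>a b. star (a + b) = star a + star b)"

definition right_ideal :: "'a::ring_1 \<Rightarrow> 'a set" where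
  "right_ideal x = {x * r | r. True}"

definition left_ideal :: "'a::ring_1 \<Rightarrow> 'a set" where
  "left_ideal x = {r * x | r. True}"

definition is_core_inverse :: "('a::ring_1 \<Rightarrow> 'a) \<Rightarrow> 'a \<Rightarrow> 'a \<Rightarrow> bool" where
  "is_core_inverse star a x \<longleftrightarrow>
     a * x * a = a \<and> right_ideal x = right_ideal a \<and> left_ideal x = left_ideal (star a)"

definition core_invertible :: "('a::ring_1 \<Rightarrow> 'a) \<Rightarrow> 'a \<Rightarrow> bool" where
  "core_invertible star a \<longleftrightarrow> (\<exists>x. is_core_inverse star a x)"

end

theory Submission
  imports Defs
begin

text \<open>
  If b is the core inverse of a, then b \<in> aR gives a b^2 = b, and b \<in> Ra^* together with
  a^* = (aba)^* gives b = b (ab)^*; hence ab = ab (ab)^* is Hermitian. Conversely, write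
  a = c a^2 using Ra = Ra^2. Then b = a b^2 = cab, so bab = b and b a^2 = a; the identities
  a = b a^2, b = a b^2, b = (b b^*) a^* and a^* = a^* (ab) exhibit the two ideal equalities.
\<close>

lemma right_ideal_eq_iff:
  "right_ideal x = right_ideal y \<longleftrightarrow> (\<exists>r. x = y * r) \<and> (\<exists>s. y = x * s)"
proof
  assume "right_ideal x = right_ideal y"
  moreover have "x \<in> right_ideal x" "y \<in> right_ideal y"
    unfolding right_ideal_def by (metis (mono_tags) mem_Collect_eq mult_1_right)+
  ultimately show "(\<exists>r. x = y * r) \<and> (\<exists>s. y = x * s)"
    unfolding right_ideal_def by auto
next
  assume "(\<exists>r. x = y * r) \<and> (\<exists>s. y = x * s)"
  then obtain r s where "x = y * r" "y = x * s" by blast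
  then show "right_ideal x = right_ideal y"
    unfolding right_ideal_def by (auto simp: mult.assoc) (metis mult.assoc)+
qed

lemma left_ideal_eq_iff:
  "left_ideal x = left_ideal y \<longleftrightarrow> (\<exists>r. x = r * y) \<and> (\<exists>s. y = s * x)"
proof
  assume "left_ideal x = left_ideal y"
  moreover have "x \<in> left_ideal x" "y \<in> left_ideal y"
    unfolding left_ideal_def by (metis (mono_tags) mem_Collect_eq mult_1_left)+
  ultimately show "(\<exists>r. x = r * y) \<and> (\<exists>s. y = s * x)"
    unfolding left_ideal_def by auto
next
  assume "(\<exists>r. x = r * y) \<and> (\<exists>s. y = s * x)"
  then obtain r s where "x = r * y" "y = s * x" by blast
  then show "left_ideal x = left_ideal y"
    unfolding left_ideal_def by (auto simp: mult.assoc[symmetric]) (metis mult.assoc)+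
qed

lemma involution_star_star: "involution star \<Longrightarrow> star (star x) = x"
  unfolding involution_def by blast

lemma involution_star_mult: "involution star \<Longrightarrow> star (x * y) = star y * star x"
  unfolding involution_def by blast

lemma hermitian_if_eq_mult_star:
  assumes "involution star" and "p = p * star p"
  shows "star p = p"
proof -
  have "star p = star (p * star p)" using assms(2) by simp
  also have "\<dots> = p * star p"
    using assms(1) by (simp add: involution_star_mult involution_star_star)
  finally show ?thesis using assms(2) by simp
qed

lemma core_inverse_equations:
  assumes inv: "involution star" and core: "is_core_inverse star a b"
  shows "a * b * a = a" and "star (a * b) = a * b" and "a * b ^ 2 = b"
proof -
  show aba: "a * b * a = a" using core unfolding is_core_inverse_def by blast
  obtain r where b_right: "b = a * r"
    using core unfolding is_core_inverse_def right_ideal_eq_iff by blast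
  obtain s where b_left: "b = s * star a"
    using core unfolding is_core_inverse_def left_ideal_eq_iff by blast
  have "star a = star a * star b * star a"
    using aba inv by (metis involution_star_mult mult.assoc)
  then have "b = b * star (a * b)"
    using b_left inv by (metis involution_star_mult mult.assoc)
  then have "a * b = a * b * star (a * b)" by (metis mult.assoc)
  then show "star (a * b) = a * b" using inv hermitian_if_eq_mult_star by blast
  show "a * b ^ 2 = b"
    using b_right aba by (simp add: power2_eq_square mult.assoc[symmetric])
qed

lemma core_inverse_if_equations:
  assumes inv: "involution star" and index: "left_ideal a = left_ideal (a ^ 2)"
    and aba: "a * b * a = a" and hermitian: "star (a * b) = a * b" and abb_power: "a * b ^ 2 = b"
  shows "is_core_inverse star a b"
proof -
  obtain c where c: "a = c * (a * a)"
    using index unfolding left_ideal_eq_iff power2_eq_square by blast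
  have abb: "a * (b * b) = b" using abb_power by (simp add: power2_eq_square)
  have b_eq: "b = c * a * b" using c abb by (metis mult.assoc)
  have bab: "b * a * b = b" using b_eq aba by (metis mult.assoc)
  have baa: "a = b * (a * a)" using b_eq c aba by (metis mult.assoc)
  have "right_ideal b = right_ideal a"
    unfolding right_ideal_eq_iff using baa abb by metis
  moreover have "b = (b * star b) * star a"
    using bab hermitian inv by (metis involution_star_mult mult.assoc)
  moreover have "star a = star a * a * b"
    using aba hermitian inv by (metis involution_star_mult mult.assoc)
  ultimately show ?thesis
    unfolding is_core_inverse_def left_ideal_eq_iff using aba by metis
qed

theorem theorem3p3:
  fixes star :: "'a::ring_1 \<Rightarrow> 'a" and a b :: 'a
  assumes "involution star"
    and "left_ideal a = left_ideal (a ^ 2)"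
  shows "(core_invertible star a \<and> is_core_inverse star a b) \<longleftrightarrow>
         (a * b * a = a \<and> star (a * b) = a * b \<and> a * b ^ 2 = b)"
proof
  assume "core_invertible star a \<and> is_core_inverse star a b"
  then show "a * b * a = a \<and> star (a * b) = a * b \<and> a * b ^ 2 = b"
    using core_inverse_equations assms(1) by blast
next
  assume "a * b * a = a \<and> star (a * b) = a * b \<and> a * b ^ 2 = b"
  then have "is_core_inverse star a b"
    using core_inverse_if_equations assms by blast
  then show "core_invertible star a \<and> is_core_inverse star a b"
    unfolding core_invertible_def by blast
qed

end
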